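(* Let $\Upsilon$ be a finite alphabet with a partition $\{\Upsilon_0,\Upsilon_1\}$, where $|\Upsilon_0|=n_0$ and $|\Upsilon_1|=n_1$ are positive integers. Let $(\eta,\omega)=((\eta_\ell)_{\ell\ge1},(\omega_\ell)_{\ell\ge1})$ be a pair of nonnegative integer sequences, each with finite support. Then there exists an exhaustive prefix-free list over $\Upsilon$ whose (parity-preserving) length distribution is $(\eta,\omega)$ if and only if the following two conditions hold: (a) $\mathsf{K}^+=0$; (b) $\mathsf{K}^+_\ell\ge|\mathsf{K}^-_\ell|$ for every $\ell\ge1$.
   Context: A word over $\Upsilon$ is even (resp. odd) if it contains an even (resp. odd) number of symbols from $\Upsilon_1$; $(\Upsilon^\ell)_0$ and $(\Upsilon^\ell)_1$ denote the even and odd words of length $\ell$. A finite list $\mathcal{L}$ of nonempty words over $\Upsilon$ is prefix-free if no word in it is a prefix of another word in it, and exhaustive if every word over $\Upsilon$ either has a prefix in $\mathcal{L}$ or is a prefix of some word in $\mathcal{L}$. The (parity-preserving) length distribution of $\mathcal{L}$ is the pair $(\eta,\omega)$ with $\eta_\ell=|\mathcal{L}\cap(\Upsilon^\ell)_0|$ and $\omega_\ell=|\mathcal{L}\cap(\Upsilon^\ell)_1|$ for $\ell\ge1$. For integers $n$ and $\ell>0$ and an integer sequence $\mu=(\mu_i)_{i\ge1}$ with finite support, $\mathsf{K}_\ell(\mu,n)=n^\ell-\sum_{i=1}^{\ell}\mu_i n^{\ell-i}$. Define $\mathsf{K}^+_\ell=\mathsf{K}_\ell(\eta+\omega,n_0+n_1)$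 and $\mathsf{K}^-_\ell=\mathsf{K}_\ell(\eta-\omega,n_0-n_1)$ (with $0^0=1$). Let $\mathsf{r}$ be the largest index in the union of the supports of $\eta$ and $\omega$, and set $\mathsf{K}^\pm=\mathsf{K}^\pm_{\mathsf{r}}$. *)

theory Defs
  imports Main "HOL-Library.Sublist"
begin

definition even_word :: "'a set \<Rightarrow> 'a list \<Rightarrow> bool" where
  "even_word U1 w \<longleftrightarrow> even (length (filter (\<lambda>x. x \<in> U1) w))"

definition odd_word :: "'a set \<Rightarrow> 'a list \<Rightarrow> bool" where
  "odd_word U1 w \<longleftrightarrow> odd (length (filter (\<lambda>x. x \<in> U1) w))"

definition prefix_free_list :: "'a list list \<Rightarrow> bool" where
  "prefix_free_list L \<longleftrightarrow> (\<forall>w\<in>set L. w \<noteq> []) \<and>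
     (\<forall>i<length L. \<forall>j<length L. i \<noteq> j \<longrightarrow> \<not> prefix (L ! i) (L ! j))"

definition exhaustive_list :: "'a set \<Rightarrow> 'a list list \<Rightarrow> bool" where
  "exhaustive_list Ups L \<longleftrightarrow> (\<forall>w. set w \<subseteq> Ups \<longrightarrow>
     (\<exists>v\<in>set L. prefix v w) \<or> (\<exists>v\<in>set L. prefix w v))"

definition has_length_distribution ::
  "'a set \<Rightarrow> 'a list list \<Rightarrow> (nat \<Rightarrow> nat) \<Rightarrow> (nat \<Rightarrow> nat) \<Rightarrow> bool" where
  "has_length_distribution U1 L \<eta> \<omega> \<longleftrightarrow> (\<forall>l\<ge>1.
     \<eta> l = length (filter (\<lambda>w. length w = l \<and> even_word U1 w) L) \<and>
     \<omega> l = length (filter (\<lambda>w. length w = l \<and> odd_word U1 w) L))"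

definition Kfun :: "(nat \<Rightarrow> int) \<Rightarrow> int \<Rightarrow> nat \<Rightarrow> int" where
  "Kfun \<mu> n l = n ^ l - (\<Sum>i=1..l. \<mu> i * n ^ (l - i))"

definition Kplus :: "(nat \<Rightarrow> nat) \<Rightarrow> (nat \<Rightarrow> nat) \<Rightarrow> nat \<Rightarrow> nat \<Rightarrow> nat \<Rightarrow> int" where
  "Kplus \<eta> \<omega> n0 n1 l = Kfun (\<lambda>i. int (\<eta> i) + int (\<omega> i)) (int n0 + int n1) l"

definition Kminus :: "(nat \<Rightarrow> nat) \<Rightarrow> (nat \<Rightarrow> nat) \<Rightarrow> nat \<Rightarrow> nat \<Rightarrow> nat \<Rightarrow> int" where
  "Kminus \<eta> \<omega> n0 n1 l = Kfun (\<lambda>i. int (\<eta> i) - int (\<omega> i)) (int n0 - int n1) l"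

definition support :: "(nat \<Rightarrow> nat) \<Rightarrow> nat set" where
  "support \<mu> = {l. 1 \<le> l \<and> \<mu> l \<noteq> 0}"

definition rmax :: "(nat \<Rightarrow> nat) \<Rightarrow> (nat \<Rightarrow> nat) \<Rightarrow> nat" where
  "rmax \<eta> \<omega> = Max (support \<eta> \<union> support \<omega> \<union> {0})"

end

(*
  Call a word of length k uncovered by a prefix code S if no codeword is a prefix of it.
  Sorting the words of length k by their codeword prefix, for any multiplicative letter weight g
    sum of g over the uncovered words = (sum_a g a)^k - sum over v in S with |v| <= k of g v (sum_a g a)^(k-|v|).
  For g = 1 this says that K+_k counts the uncovered words of length k; for g = -1 on U1 and 1 on U0
  it says that K-_k is the number of even minus the number of odd uncovered words. So K+_k >= |K-_k|
  for every prefix code, and exhaustiveness means K+_r = 0.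
  Conversely, codewords can be chosen greedily by length: when the lengths up to k are placed,
  there are eta_(k+1) + (K+_(k+1) + K-_(k+1))/2 even and omega_(k+1) + (K+_(k+1) - K-_(k+1))/2 odd
  uncovered words of length k+1 available.
*)
theory Submission
  imports Defs
begin

definition words_of_length :: "'a set \<Rightarrow> nat \<Rightarrow> 'a list set" where
  "words_of_length A k = {w. set w \<subseteq> A \<and> length w = k}"

definition prefix_free :: "'a list set \<Rightarrow> bool" where
  "prefix_free S \<longleftrightarrow> (\<forall>v\<in>S. \<forall>w\<in>S. prefix v w \<longrightarrow> v = w)"

definition prefix_code :: "'a set \<Rightarrow> 'a list set \<Rightarrow> bool" where
  "prefix_code A S \<longleftrightarrow> finite S \<and> (\<forall>v\<in>S. v \<noteq> [] \<and> set v \<subseteq> A) \<and> prefix_free S"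

definition uncovered :: "'a set \<Rightarrow> 'a list set \<Rightarrow> nat \<Rightarrow> 'a list set" where
  "uncovered A S k = {w \<in> words_of_length A k. \<not> (\<exists>v\<in>S. prefix v w)}"

definition word_weight :: "('a \<Rightarrow> 'b::comm_monoid_mult) \<Rightarrow> 'a list \<Rightarrow> 'b" where
  "word_weight g w = prod_list (map g w)"

definition count_of_length :: "('a list \<Rightarrow> bool) \<Rightarrow> 'a list set \<Rightarrow> nat \<Rightarrow> nat" where
  "count_of_length P S l = card {w \<in> S. length w = l \<and> P w}"

lemma prefix_eq_if_length_ge: "prefix v w \<Longrightarrow> length w \<le> length v \<Longrightarrow> v = w"
  by (auto simp: prefix_def)

lemma finite_words_of_length: "finite A \<Longrightarrow> finite (words_of_length A k)"
  unfolding words_of_length_def by (rule finite_lists_length_eq)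

lemma finite_uncovered: "finite A \<Longrightarrow> finite (uncovered A S k)"
  unfolding uncovered_def by (simp add: finite_words_of_length)

lemma words_of_length_Suc:
  "words_of_length A (Suc k) = (\<lambda>(a, w). a # w) ` (A \<times> words_of_length A k)"
  unfolding words_of_length_def by (auto simp: length_Suc_conv)

lemma word_weight_append [simp]: "word_weight g (v @ u) = word_weight g v * word_weight g u"
  by (simp add: word_weight_def)

lemma word_weight_one [simp]: "word_weight (\<lambda>_. 1) w = 1"
  by (induction w) (simp_all add: word_weight_def)

lemma sum_word_weight_words_of_length:
  fixes g :: "'a \<Rightarrow> 'b::comm_semiring_1"
  assumes "finite A"
  shows "(\<Sum>w\<in>words_of_length A k. word_weight g w) = (\<Sum>a\<in>A. g a) ^ k"
proof (induction k)
  case 0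
  have "words_of_length A 0 = {[]}" by (auto simp: words_of_length_def)
  then show ?case by (simp add: word_weight_def)
next
  case (Suc k)
  have inj: "inj_on (\<lambda>(a, w). a # w) (A \<times> words_of_length A k)" by (auto simp: inj_on_def)
  have "(\<Sum>w\<in>words_of_length A (Suc k). word_weight g w)
      = (\<Sum>(a, w)\<in>A \<times> words_of_length A k. g a * word_weight g w)"
    unfolding words_of_length_Suc sum.reindex[OF inj]
    by (auto simp: word_weight_def intro!: sum.cong)
  also have "\<dots> = (\<Sum>a\<in>A. g a) * (\<Sum>w\<in>words_of_length A k. word_weight g w)"
    by (simp add: sum.cartesian_product[symmetric] sum_product)
  finally show ?case using Suc by simp
qed

lemma sum_word_weight_extensions:
  fixes g :: "'a \<Rightarrow> 'b::comm_semiring_1"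
  assumes "finite A" "set v \<subseteq> A" "length v \<le> k"
  shows "(\<Sum>w\<in>{w \<in> words_of_length A k. prefix v w}. word_weight g w)
       = word_weight g v * (\<Sum>a\<in>A. g a) ^ (k - length v)"
proof -
  have extensions: "{w \<in> words_of_length A k. prefix v w} = (\<lambda>u. v @ u) ` words_of_length A (k - length v)"
    using assms(2,3) by (auto simp: words_of_length_def prefix_def)
  have "inj_on (\<lambda>u. v @ u) (words_of_length A (k - length v))" by (auto simp: inj_on_def)
  then show ?thesis
    by (simp add: extensions sum.reindex sum_distrib_left[symmetric]
        sum_word_weight_words_of_length[OF assms(1)])
qed

lemma sum_word_weight_uncovered:
  fixes g :: "'a \<Rightarrow> 'b::comm_semiring_1"
  assumes "finite A" and code: "prefix_code A S"
  shows "(\<Sum>w\<in>uncovered A S k. word_weight g w)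
       + (\<Sum>v\<in>{v \<in> S. length v \<le> k}. word_weight g v * (\<Sum>a\<in>A. g a) ^ (k - length v))
       = (\<Sum>a\<in>A. g a) ^ k"
proof -
  let ?S = "{v \<in> S. length v \<le> k}"
  let ?E = "\<lambda>v. {w \<in> words_of_length A k. prefix v w}"
  have S: "finite S" "\<forall>v\<in>S. set v \<subseteq> A" "prefix_free S"
    using code by (auto simp: prefix_code_def)
  have split: "words_of_length A k = uncovered A S k \<union> (\<Union>v\<in>?S. ?E v)"
    by (auto simp: uncovered_def words_of_length_def dest: prefix_length_le)
  have disjoint: "?E v \<inter> ?E v' = {}" if "v \<in> ?S" "v' \<in> ?S" "v \<noteq> v'" for v v'
  proof -
    have "\<not> (prefix v w \<and> prefix v' w)" for w
      using that S(3) prefix_same_cases[of v w v'] unfolding prefix_free_def by auto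
    then show ?thesis by blast
  qed
  have finite_E: "finite (?E v)" for v
    using finite_words_of_length[OF assms(1)] by simp
  have "(\<Sum>w\<in>words_of_length A k. word_weight g w)
      = (\<Sum>w\<in>uncovered A S k. word_weight g w) + (\<Sum>w\<in>(\<Union>v\<in>?S. ?E v). word_weight g w)"
    using finite_uncovered[OF assms(1)] S(1) finite_E
    by (subst split, subst sum.union_disjoint) (auto simp: uncovered_def)
  also have "(\<Sum>w\<in>(\<Union>v\<in>?S. ?E v). word_weight g w) = (\<Sum>v\<in>?S. \<Sum>w\<in>?E v. word_weight g w)"
    using S(1) disjoint finite_E by (intro sum.UNION_disjoint) simp_all
  also have "\<dots> = (\<Sum>v\<in>?S. word_weight g v * (\<Sum>a\<in>A. g a) ^ (k - length v))"
  proof (rule sum.cong[OF refl])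
    fix v assume "v \<in> ?S"
    then show "(\<Sum>w\<in>?E v. word_weight g w) = word_weight g v * (\<Sum>a\<in>A. g a) ^ (k - length v)"
      using S(2) by (intro sum_word_weight_extensions[OF assms(1)]) auto
  qed
  finally show ?thesis by (simp add: sum_word_weight_words_of_length[OF assms(1)])
qed

lemma sum_by_length:
  fixes h :: "'a list \<Rightarrow> 'b::comm_semiring_1"
  assumes "finite S" "[] \<notin> S"
  shows "(\<Sum>v\<in>{v \<in> S. length v \<le> k}. h v * m ^ (k - length v))
       = (\<Sum>i=1..k. (\<Sum>v\<in>{v \<in> S. length v = i}. h v) * m ^ (k - i))"
proof -
  have "(\<Sum>i=1..k. (\<Sum>v\<in>{v \<in> S. length v = i}. h v) * m ^ (k - i))
      = (\<Sum>i\<in>{1..k}. \<Sum>v\<in>{v \<in> S. length v = i}. h v * m ^ (k - length v))"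
    by (auto simp: sum_distrib_right intro!: sum.cong)
  also have "\<dots> = (\<Sum>v\<in>(\<Union>i\<in>{1..k}. {v \<in> S. length v = i}). h v * m ^ (k - length v))"
    using assms(1) by (intro sum.UNION_disjoint[symmetric]) auto
  also have "(\<Union>i\<in>{1..k}. {v \<in> S. length v = i}) = {v \<in> S. length v \<le> k}"
    using assms(2) by (auto simp: Suc_le_eq)
  finally show ?thesis ..
qed

lemma Kfun_Suc: "Kfun \<mu> n (Suc l) = n * Kfun \<mu> n l - \<mu> (Suc l)"
proof -
  have "(\<Sum>i=1..l. \<mu> i * n ^ (Suc l - i)) = n * (\<Sum>i=1..l. \<mu> i * n ^ (l - i))"
    by (auto simp: sum_distrib_left Suc_diff_le intro!: sum.cong)
  then show ?thesis by (simp add: Kfun_def algebra_simps)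
qed

lemma Kfun_cong: "(\<And>i. 1 \<le> i \<Longrightarrow> i \<le> l \<Longrightarrow> \<mu> i = \<nu> i) \<Longrightarrow> Kfun \<mu> n l = Kfun \<nu> n l"
  unfolding Kfun_def by (auto intro!: sum.cong)

lemma sum_word_weight_uncovered_eq_Kfun:
  fixes g :: "'a \<Rightarrow> int"
  assumes "finite A" "prefix_code A S"
  shows "(\<Sum>w\<in>uncovered A S k. word_weight g w)
       = Kfun (\<lambda>i. \<Sum>v\<in>{v \<in> S. length v = i}. word_weight g v) (\<Sum>a\<in>A. g a) k"
proof -
  have "finite S" "[] \<notin> S" using assms(2) by (auto simp: prefix_code_def)
  then show ?thesis
    using sum_word_weight_uncovered[OF assms, of g k]
    by (simp add: Kfun_def sum_by_length eq_diff_eq)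
qed

lemma odd_word_iff_not_even_word: "odd_word U1 w \<longleftrightarrow> \<not> even_word U1 w"
  by (simp add: odd_word_def even_word_def)

lemma word_weight_parity_sign:
  "word_weight (\<lambda>a. if a \<in> U1 then -1 else 1) w = (if even_word U1 w then 1 else (-1::int))"
  by (induction w) (auto simp: word_weight_def even_word_def)

lemma card_eq_even_plus_odd:
  assumes "finite X"
  shows "card X = card {w \<in> X. even_word U1 w} + card {w \<in> X. odd_word U1 w}"
proof -
  have "X = {w \<in> X. even_word U1 w} \<union> {w \<in> X. odd_word U1 w}"
    by (auto simp: odd_word_iff_not_even_word)
  also have "card \<dots> = card {w \<in> X. even_word U1 w} + card {w \<in> X. odd_word U1 w}"
    using assms by (intro card_Un_disjoint) (auto simp: odd_word_iff_not_even_word)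
  finally show ?thesis .
qed

lemma sum_parity_sign:
  assumes "finite X"
  shows "(\<Sum>w\<in>X. word_weight (\<lambda>a. if a \<in> U1 then -1 else 1) w)
       = int (card {w \<in> X. even_word U1 w}) - int (card {w \<in> X. odd_word U1 w})"
proof -
  have "(\<Sum>w\<in>X. word_weight (\<lambda>a. if a \<in> U1 then -1 else 1) w)
      = (\<Sum>w\<in>X. if even_word U1 w then 1 else - 1 :: int)"
    by (intro sum.cong) (simp_all add: word_weight_parity_sign)
  also have "\<dots> = (\<Sum>w\<in>X \<inter> {w. even_word U1 w}. 1) + (\<Sum>w\<in>X \<inter> - {w. even_word U1 w}. - 1)"
    using assms by (rule sum.If_cases)
  also have "X \<inter> {w. even_word U1 w} = {w \<in> X. even_word U1 w}"
    by blast
  also have "X \<inter> - {w. even_word U1 w} = {w \<in> X. odd_word U1 w}"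
    by (auto simp: odd_word_iff_not_even_word)
  finally show ?thesis by simp
qed

lemma prefix_free_Un_uncovered:
  assumes "prefix_free S" "\<forall>v\<in>S. length v \<le> m" "T \<subseteq> uncovered A S m"
  shows "prefix_free (S \<union> T)"
  unfolding prefix_free_def
proof (intro ballI impI)
  fix v w assume v: "v \<in> S \<union> T" and w: "w \<in> S \<union> T" and "prefix v w"
  have T_length: "length t = m" if "t \<in> T" for t
    using that assms(3) by (auto simp: uncovered_def words_of_length_def)
  have T_uncovered: "\<not> prefix u t" if "t \<in> T" "u \<in> S" for t u
    using that assms(3) by (auto simp: uncovered_def)
  show "v = w"
  proof (cases "v \<in> T")
    case True
    have "length w \<le> m" using w assms(2) T_length by auto
    then show ?thesis using prefix_eq_if_length_ge[OF \<open>prefix v w\<close>] T_length True by auto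
  next
    case False
    then show ?thesis using v w T_uncovered assms(1) \<open>prefix v w\<close> unfolding prefix_free_def by auto
  qed
qed

lemma count_of_length_eq_0: "\<forall>v\<in>S. length v \<noteq> l \<Longrightarrow> count_of_length P S l = 0"
  by (auto simp: count_of_length_def card_eq_0_iff)

lemma count_of_length_Un_uncovered:
  assumes "finite A" "finite S" "T \<subseteq> uncovered A S m"
  shows "count_of_length P (S \<union> T) l = count_of_length P S l + (if l = m then card {t \<in> T. P t} else 0)"
proof -
  have T: "finite T" "S \<inter> T = {}" "\<forall>t\<in>T. length t = m"
    using assms finite_subset[OF assms(3) finite_uncovered]
    by (auto simp: uncovered_def words_of_length_def)
  have "{w \<in> S \<union> T. length w = l \<and> P w} = {w \<in> S. length w = l \<and> P w} \<union> {t \<in> T. length t = l \<and> P t}"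
    by blast
  moreover have "{t \<in> T. length t = l \<and> P t} = (if l = m then {t \<in> T. P t} else {})"
    using T(3) by auto
  moreover have "card ({w \<in> S. length w = l \<and> P w} \<union> {t \<in> T. length t = l \<and> P t})
      = card {w \<in> S. length w = l \<and> P w} + card {t \<in> T. length t = l \<and> P t}"
    using T assms(2) by (intro card_Un_disjoint) auto
  ultimately show ?thesis
    by (simp add: count_of_length_def)
qed

lemma exhaustive_list_iff_uncovered_empty:
  assumes "A \<noteq> {}" "\<forall>v\<in>set L. length v \<le> r"
  shows "exhaustive_list A L \<longleftrightarrow> uncovered A (set L) r = {}"
proof
  assume exhaustive: "exhaustive_list A L"
  show "uncovered A (set L) r = {}"
  proof (rule ccontr)
    assume "uncovered A (set L) r \<noteq> {}"
    then obtain w where w: "set w \<subseteq> A" "length w = r" "\<forall>v\<in>set L. \<not> prefix v w"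
      by (auto simp: uncovered_def words_of_length_def)
    with exhaustive obtain v where "v \<in> set L" "prefix w v"
      unfolding exhaustive_list_def by blast
    with w assms(2) show False
      by (metis prefix_eq_if_length_ge)
  qed
next
  assume empty: "uncovered A (set L) r = {}"
  have covered: "\<exists>v\<in>set L. prefix v w" if "set w \<subseteq> A" "length w = r" for w
    using empty that by (auto simp: uncovered_def words_of_length_def)
  obtain a where "a \<in> A" using assms(1) by blast
  show "exhaustive_list A L"
    unfolding exhaustive_list_def
  proof (intro allI impI)
    fix w assume w: "set w \<subseteq> A"
    \<comment> \<open>Truncate or pad \<open>w\<close> to length \<open>r\<close>; the codeword covering the result is comparable with \<open>w\<close>.\<close>
    define w' where "w' = take r w @ replicate (r - length w) a"
    have "set w' \<subseteq> A" "length w' = r"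
      using w \<open>a \<in> A\<close> set_take_subset[of r w] by (auto simp: w'_def)
    then obtain v where v: "v \<in> set L" "prefix v w'" using covered by blast
    have "prefix w' w \<or> prefix w w'"
      by (cases "r \<le> length w") (simp_all add: w'_def take_is_prefix)
    with v show "(\<exists>v\<in>set L. prefix v w) \<or> (\<exists>v\<in>set L. prefix w v)"
      by (metis prefix_order.trans prefix_same_cases)
  qed
qed

lemma prefix_free_list_iff:
  "prefix_free_list L \<longleftrightarrow> (\<forall>w\<in>set L. w \<noteq> []) \<and> distinct L \<and> prefix_free (set L)"
proof
  assume L: "prefix_free_list L"
  have "distinct L"
  proof (unfold distinct_conv_nth, intro allI impI)
    fix i j assume "i < length L" "j < length L" "i \<noteq> j"
    then have "\<not> prefix (L ! i) (L ! j)" using L by (simp add: prefix_free_list_def)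
    then show "L ! i \<noteq> L ! j" by auto
  qed
  moreover have "prefix_free (set L)"
    using L unfolding prefix_free_list_def prefix_free_def by (metis in_set_conv_nth)
  ultimately show "(\<forall>w\<in>set L. w \<noteq> []) \<and> distinct L \<and> prefix_free (set L)"
    using L by (simp add: prefix_free_list_def)
next
  assume L: "(\<forall>w\<in>set L. w \<noteq> []) \<and> distinct L \<and> prefix_free (set L)"
  show "prefix_free_list L"
    unfolding prefix_free_list_def
  proof (intro conjI allI impI)
    show "\<forall>w\<in>set L. w \<noteq> []" using L by simp
    fix i j assume "i < length L" "j < length L" "i \<noteq> j"
    then have "L ! i \<noteq> L ! j" using L nth_eq_iff_index_eq by blast
    with \<open>i < length L\<close> \<open>j < length L\<close> show "\<not> prefix (L ! i) (L ! j)"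
      using L unfolding prefix_free_def by auto
  qed
qed

lemma has_length_distribution_iff_counts:
  assumes "distinct L"
  shows "has_length_distribution U1 L \<eta> \<omega> \<longleftrightarrow>
    (\<forall>l\<ge>1. count_of_length (even_word U1) (set L) l = \<eta> l \<and> count_of_length (odd_word U1) (set L) l = \<omega> l)"
proof -
  have "length (filter (\<lambda>w. length w = l \<and> P w) L) = count_of_length P (set L) l" for P l
    using distinct_length_filter[OF assms] by (simp add: count_of_length_def Int_def conj_ac)
  then show ?thesis by (auto simp: has_length_distribution_def)
qed

lemma le_rmax:
  assumes "finite (support \<eta>)" "finite (support \<omega>)" "1 \<le> l" "\<eta> l \<noteq> 0 \<or> \<omega> l \<noteq> 0"
  shows "l \<le> rmax \<eta> \<omega>"
  unfolding rmax_def using assms by (intro Max_ge) (auto simp: support_def)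

lemma length_le_rmax:
  assumes "finite (support \<eta>)" "finite (support \<omega>)" "finite S" "v \<in> S" "v \<noteq> []"
    and "\<forall>l\<ge>1. count_of_length (even_word U1) S l = \<eta> l \<and> count_of_length (odd_word U1) S l = \<omega> l"
  shows "length v \<le> rmax \<eta> \<omega>"
proof (rule le_rmax[OF assms(1,2)])
  show "1 \<le> length v" using assms(5) by (simp add: Suc_le_eq)
  have "v \<in> {w \<in> S. length w = length v \<and> even_word U1 w} \<or> v \<in> {w \<in> S. length w = length v \<and> odd_word U1 w}"
    using assms(4) by (auto simp: odd_word_iff_not_even_word)
  then have "count_of_length (even_word U1) S (length v) \<noteq> 0 \<or> count_of_length (odd_word U1) S (length v) \<noteq> 0"
    using assms(3) by (auto simp: count_of_length_def card_eq_0_iff)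
  with assms(6) \<open>1 \<le> length v\<close> show "\<eta> (length v) \<noteq> 0 \<or> \<omega> (length v) \<noteq> 0" by simp
qed

lemma Kplus_cong:
  "(\<And>i. 1 \<le> i \<Longrightarrow> i \<le> l \<Longrightarrow> \<eta> i = \<eta>' i \<and> \<omega> i = \<omega>' i)
    \<Longrightarrow> Kplus \<eta> \<omega> n0 n1 l = Kplus \<eta>' \<omega>' n0 n1 l"
  unfolding Kplus_def by (rule Kfun_cong) simp

lemma Kminus_cong:
  "(\<And>i. 1 \<le> i \<Longrightarrow> i \<le> l \<Longrightarrow> \<eta> i = \<eta>' i \<and> \<omega> i = \<omega>' i)
    \<Longrightarrow> Kminus \<eta> \<omega> n0 n1 l = Kminus \<eta>' \<omega>' n0 n1 l"
  unfolding Kminus_def by (rule Kfun_cong) simp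

lemma Kplus_Suc:
  "Kplus \<eta> \<omega> n0 n1 (Suc l)
     = (int n0 + int n1) * Kplus \<eta> \<omega> n0 n1 l - int (\<eta> (Suc l)) - int (\<omega> (Suc l))"
  by (simp add: Kplus_def Kfun_Suc)

lemma Kminus_Suc:
  "Kminus \<eta> \<omega> n0 n1 (Suc l)
     = (int n0 - int n1) * Kminus \<eta> \<omega> n0 n1 l - int (\<eta> (Suc l)) + int (\<omega> (Suc l))"
  by (simp add: Kminus_def Kfun_Suc)

locale parity_alphabet =
  fixes Ups U0 U1 :: "'a set"
  assumes finite_Ups: "finite Ups" and partition: "U0 \<union> U1 = Ups" "U0 \<inter> U1 = {}"
begin

abbreviation even_count :: "'a list set \<Rightarrow> nat \<Rightarrow> nat" where
  "even_count \<equiv> count_of_length (even_word U1)"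

abbreviation odd_count :: "'a list set \<Rightarrow> nat \<Rightarrow> nat" where
  "odd_count \<equiv> count_of_length (odd_word U1)"

lemma card_Ups: "card Ups = card U0 + card U1"
  using finite_Ups partition by (metis card_Un_disjoint finite_Un)

lemma card_uncovered_eq_Kplus:
  assumes "prefix_code Ups S"
  shows "int (card (uncovered Ups S k)) = Kplus (even_count S) (odd_count S) (card U0) (card U1) k"
proof -
  have finite_S: "finite S" using assms by (simp add: prefix_code_def)
  have "int (card (uncovered Ups S k)) = (\<Sum>w\<in>uncovered Ups S k. word_weight (\<lambda>_. 1) w)"
    by simp
  also have "\<dots> = Kfun (\<lambda>i. \<Sum>v\<in>{v \<in> S. length v = i}. word_weight (\<lambda>_. 1) v) (\<Sum>a\<in>Ups. 1) k"
    by (rule sum_word_weight_uncovered_eq_Kfun[OF finite_Ups assms])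
  also have "(\<lambda>i. \<Sum>v\<in>{v \<in> S. length v = i}. word_weight (\<lambda>_. 1) v)
      = (\<lambda>i. int (even_count S i) + int (odd_count S i))"
  proof
    fix i
    have "finite {v \<in> S. length v = i}" using finite_S by simp
    from card_eq_even_plus_odd[OF this, of U1]
    show "(\<Sum>v\<in>{v \<in> S. length v = i}. word_weight (\<lambda>_. 1) v) = int (even_count S i) + int (odd_count S i)"
      by (simp add: word_weight_def count_of_length_def conj_ac)
  qed
  also have "(\<Sum>a\<in>Ups. 1) = int (card U0) + int (card U1)"
    by (simp add: card_Ups)
  finally show ?thesis by (simp add: Kplus_def)
qed

lemma parity_difference_uncovered_eq_Kminus:
  assumes "prefix_code Ups S"
  shows "int (card {w \<in> uncovered Ups S k. even_word U1 w}) - int (card {w \<in> uncovered Ups S k. odd_word U1 w})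
       = Kminus (even_count S) (odd_count S) (card U0) (card U1) k"
proof -
  let ?sign = "\<lambda>a. if a \<in> U1 then - 1 else 1 :: int"
  have finite_S: "finite S" using assms by (simp add: prefix_code_def)
  have "int (card {w \<in> uncovered Ups S k. even_word U1 w}) - int (card {w \<in> uncovered Ups S k. odd_word U1 w})
      = (\<Sum>w\<in>uncovered Ups S k. word_weight ?sign w)"
    by (rule sum_parity_sign[OF finite_uncovered[OF finite_Ups], symmetric])
  also have "\<dots> = Kfun (\<lambda>i. \<Sum>v\<in>{v \<in> S. length v = i}. word_weight ?sign v) (\<Sum>a\<in>Ups. ?sign a) k"
    by (rule sum_word_weight_uncovered_eq_Kfun[OF finite_Ups assms])
  also have "(\<lambda>i. \<Sum>v\<in>{v \<in> S. length v = i}. word_weight ?sign v)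
      = (\<lambda>i. int (even_count S i) - int (odd_count S i))"
  proof
    fix i
    have "finite {v \<in> S. length v = i}" using finite_S by simp
    from sum_parity_sign[OF this, of U1]
    show "(\<Sum>v\<in>{v \<in> S. length v = i}. word_weight ?sign v) = int (even_count S i) - int (odd_count S i)"
      by (simp add: count_of_length_def conj_ac)
  qed
  also have "(\<Sum>a\<in>Ups. ?sign a) = int (card U0) - int (card U1)"
  proof -
    have "finite U0" "finite U1" using finite_Ups partition by auto
    then have "(\<Sum>a\<in>Ups. ?sign a) = (\<Sum>a\<in>U0. ?sign a) + (\<Sum>a\<in>U1. ?sign a)"
      using partition by (metis sum.union_disjoint)
    also have "(\<Sum>a\<in>U0. ?sign a) = (\<Sum>a\<in>U0. 1)" using partition(2) by (intro sum.cong) auto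
    finally show ?thesis by simp
  qed
  finally show ?thesis by (simp add: Kminus_def)
qed

lemma abs_Kminus_le_Kplus_counts:
  assumes "prefix_code Ups S"
  shows "\<bar>Kminus (even_count S) (odd_count S) (card U0) (card U1) k\<bar>
       \<le> Kplus (even_count S) (odd_count S) (card U0) (card U1) k"
  using card_uncovered_eq_Kplus[OF assms, of k] parity_difference_uncovered_eq_Kminus[OF assms, of k]
    card_eq_even_plus_odd[OF finite_uncovered[OF finite_Ups, of S k], of U1]
  by linarith

lemma Kraft_conditions_if_complete:
  assumes code: "prefix_code Ups S" and exhaustive: "uncovered Ups S r = {}"
    and counts: "\<forall>l\<ge>1. even_count S l = \<eta> l \<and> odd_count S l = \<omega> l"
  shows "Kplus \<eta> \<omega> (card U0) (card U1) r = 0 \<and>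
    (\<forall>l\<ge>1. Kplus \<eta> \<omega> (card U0) (card U1) l \<ge> \<bar>Kminus \<eta> \<omega> (card U0) (card U1) l\<bar>)"
proof -
  have "Kplus \<eta> \<omega> (card U0) (card U1) l = Kplus (even_count S) (odd_count S) (card U0) (card U1) l"
    and "Kminus \<eta> \<omega> (card U0) (card U1) l = Kminus (even_count S) (odd_count S) (card U0) (card U1) l" for l
    using counts by (auto intro: Kplus_cong Kminus_cong)
  then show ?thesis
    using card_uncovered_eq_Kplus[OF code, of r] abs_Kminus_le_Kplus_counts[OF code] exhaustive
    by simp
qed

lemma uncovered_parity_counts_Suc:
  assumes code: "prefix_code Ups S" and short: "\<forall>v\<in>S. length v \<le> k"
    and counts: "\<forall>i. 1 \<le> i \<longrightarrow> i \<le> k \<longrightarrow> even_count S i = \<eta> i \<and> odd_count S i = \<omega> i"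
  defines "Ev \<equiv> {w \<in> uncovered Ups S (Suc k). even_word U1 w}"
    and "Od \<equiv> {w \<in> uncovered Ups S (Suc k). odd_word U1 w}"
  shows "int (card Ev) + int (card Od)
      = Kplus \<eta> \<omega> (card U0) (card U1) (Suc k) + int (\<eta> (Suc k)) + int (\<omega> (Suc k))"
    and "int (card Ev) - int (card Od)
      = Kminus \<eta> \<omega> (card U0) (card U1) (Suc k) + int (\<eta> (Suc k)) - int (\<omega> (Suc k))"
proof -
  have none_longer: "count_of_length P S (Suc k) = 0" for P
    using short by (intro count_of_length_eq_0) auto
  have "Kplus (even_count S) (odd_count S) (card U0) (card U1) k = Kplus \<eta> \<omega> (card U0) (card U1) k"
    and "Kminus (even_count S) (odd_count S) (card U0) (card U1) k = Kminus \<eta> \<omega> (card U0) (card U1) k"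
    using counts by (auto intro: Kplus_cong Kminus_cong)
  then show "int (card Ev) + int (card Od)
      = Kplus \<eta> \<omega> (card U0) (card U1) (Suc k) + int (\<eta> (Suc k)) + int (\<omega> (Suc k))"
    and "int (card Ev) - int (card Od)
      = Kminus \<eta> \<omega> (card U0) (card U1) (Suc k) + int (\<eta> (Suc k)) - int (\<omega> (Suc k))"
    using card_uncovered_eq_Kplus[OF code, of "Suc k"] parity_difference_uncovered_eq_Kminus[OF code, of "Suc k"]
      card_eq_even_plus_odd[OF finite_uncovered[OF finite_Ups, of S "Suc k"], of U1]
    by (simp_all add: Ev_def Od_def Kplus_Suc Kminus_Suc none_longer)
qed

lemma extend_prefix_code:
  assumes code: "prefix_code Ups S" and short: "\<forall>v\<in>S. length v \<le> k"
    and counts: "\<forall>i. 1 \<le> i \<longrightarrow> i \<le> k \<longrightarrow> even_count S i = \<eta> i \<and> odd_count S i = \<omega> i"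
    and Kraft: "\<bar>Kminus \<eta> \<omega> (card U0) (card U1) (Suc k)\<bar> \<le> Kplus \<eta> \<omega> (card U0) (card U1) (Suc k)"
  obtains S' where "prefix_code Ups S'" "\<forall>v\<in>S'. length v \<le> Suc k"
    "\<forall>i. 1 \<le> i \<longrightarrow> i \<le> Suc k \<longrightarrow> even_count S' i = \<eta> i \<and> odd_count S' i = \<omega> i"
proof -
  let ?U = "uncovered Ups S (Suc k)"
  define Ev where "Ev = {w \<in> ?U. even_word U1 w}"
  define Od where "Od = {w \<in> ?U. odd_word U1 w}"
  have "\<eta> (Suc k) \<le> card Ev" "\<omega> (Suc k) \<le> card Od"
    using uncovered_parity_counts_Suc[OF code short counts] Kraft unfolding Ev_def Od_def
    by linarith+
  then obtain Ev' Od' where Ev': "Ev' \<subseteq> Ev" "card Ev' = \<eta> (Suc k)"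
    and Od': "Od' \<subseteq> Od" "card Od' = \<omega> (Suc k)"
    by (metis obtain_subset_with_card_n)
  have none_longer: "count_of_length P S (Suc k) = 0" for P
    using short by (intro count_of_length_eq_0) auto
  define T where "T = Ev' \<union> Od'"
  have T: "T \<subseteq> ?U" using Ev' Od' by (auto simp: T_def Ev_def Od_def)
  have T_parity: "{t \<in> T. even_word U1 t} = Ev'" "{t \<in> T. odd_word U1 t} = Od'"
    using Ev'(1) Od'(1) by (auto simp: T_def Ev_def Od_def odd_word_iff_not_even_word)
  have counts_Un: "count_of_length P (S \<union> T) i
      = count_of_length P S i + (if i = Suc k then card {t \<in> T. P t} else 0)" for P i
    using code count_of_length_Un_uncovered[OF finite_Ups _ T] by (simp add: prefix_code_def)
  show ?thesis
  proof
    have "prefix_free (S \<union> T)"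
      using code short by (intro prefix_free_Un_uncovered[OF _ _ T]) (auto simp: prefix_code_def)
    then show "prefix_code Ups (S \<union> T)"
      using code T finite_subset[OF T finite_uncovered[OF finite_Ups]]
      by (auto simp: prefix_code_def uncovered_def words_of_length_def)
    show "\<forall>v\<in>S \<union> T. length v \<le> Suc k"
      using short T by (auto simp: uncovered_def words_of_length_def)
    show "\<forall>i. 1 \<le> i \<longrightarrow> i \<le> Suc k \<longrightarrow>
        even_count (S \<union> T) i = \<eta> i \<and> odd_count (S \<union> T) i = \<omega> i"
      unfolding counts_Un T_parity using counts none_longer Ev'(2) Od'(2) by (auto simp: le_Suc_eq)
  qed
qed

lemma prefix_code_with_counts_upto:
  assumes "\<forall>l\<ge>1. \<bar>Kminus \<eta> \<omega> (card U0) (card U1) l\<bar> \<le> Kplus \<eta> \<omega> (card U0) (card U1) l"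
  shows "\<exists>S. prefix_code Ups S \<and> (\<forall>v\<in>S. length v \<le> k) \<and>
    (\<forall>i. 1 \<le> i \<longrightarrow> i \<le> k \<longrightarrow> even_count S i = \<eta> i \<and> odd_count S i = \<omega> i)"
proof (induction k)
  case 0
  have "prefix_code Ups {}" by (simp add: prefix_code_def prefix_free_def)
  then show ?case by auto
next
  case (Suc k)
  then obtain S where S: "prefix_code Ups S" "\<forall>v\<in>S. length v \<le> k"
    "\<forall>i. 1 \<le> i \<longrightarrow> i \<le> k \<longrightarrow> even_count S i = \<eta> i \<and> odd_count S i = \<omega> i"
    by blast
  have "\<bar>Kminus \<eta> \<omega> (card U0) (card U1) (Suc k)\<bar> \<le> Kplus \<eta> \<omega> (card U0) (card U1) (Suc k)"
    using assms by simp
  then obtain S' where "prefix_code Ups S'" "\<forall>v\<in>S'. length v \<le> Suc k"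
    "\<forall>i. 1 \<le> i \<longrightarrow> i \<le> Suc k \<longrightarrow> even_count S' i = \<eta> i \<and> odd_count S' i = \<omega> i"
    by (rule extend_prefix_code[OF S])
  then show ?case by blast
qed

lemma complete_code_if_Kraft_conditions:
  assumes finite_supports: "finite (support \<eta>)" "finite (support \<omega>)"
    and Kraft: "Kplus \<eta> \<omega> (card U0) (card U1) (rmax \<eta> \<omega>) = 0"
      "\<forall>l\<ge>1. \<bar>Kminus \<eta> \<omega> (card U0) (card U1) l\<bar> \<le> Kplus \<eta> \<omega> (card U0) (card U1) l"
  shows "\<exists>S. prefix_code Ups S \<and> uncovered Ups S (rmax \<eta> \<omega>) = {}
    \<and> (\<forall>l\<ge>1. even_count S l = \<eta> l \<and> odd_count S l = \<omega> l)"
proof -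
  let ?r = "rmax \<eta> \<omega>"
  obtain S where code: "prefix_code Ups S" and short: "\<forall>v\<in>S. length v \<le> ?r"
    and counts_upto: "\<forall>i. 1 \<le> i \<longrightarrow> i \<le> ?r \<longrightarrow> even_count S i = \<eta> i \<and> odd_count S i = \<omega> i"
    using prefix_code_with_counts_upto[OF Kraft(2)] by blast
  have counts: "\<forall>l\<ge>1. even_count S l = \<eta> l \<and> odd_count S l = \<omega> l"
  proof (intro allI impI)
    fix l :: nat assume "1 \<le> l"
    show "even_count S l = \<eta> l \<and> odd_count S l = \<omega> l"
    proof (cases "l \<le> ?r")
      case True
      with counts_upto \<open>1 \<le> l\<close> show ?thesis by blast
    next
      case False
      then have "\<not> (\<eta> l \<noteq> 0 \<or> \<omega> l \<noteq> 0)"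
        using le_rmax[OF finite_supports \<open>1 \<le> l\<close>] by (rule contrapos_nn)
      moreover have "count_of_length P S l = 0" for P
        using short False by (intro count_of_length_eq_0) auto
      ultimately show ?thesis by simp
    qed
  qed
  have "int (card (uncovered Ups S ?r)) = Kplus \<eta> \<omega> (card U0) (card U1) ?r"
    unfolding card_uncovered_eq_Kplus[OF code] using counts by (intro Kplus_cong) auto
  then have "uncovered Ups S ?r = {}"
    using Kraft(1) finite_uncovered[OF finite_Ups] by simp
  with code counts show ?thesis by blast
qed

lemma exhaustive_list_iff_complete_code:
  assumes "Ups \<noteq> {}" and finite_supports: "finite (support \<eta>)" "finite (support \<omega>)"
  shows "(\<exists>L. (\<forall>w\<in>set L. set w \<subseteq> Ups) \<and> prefix_free_list L \<and> exhaustive_list Ups L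
              \<and> has_length_distribution U1 L \<eta> \<omega>)
    \<longleftrightarrow> (\<exists>S. prefix_code Ups S \<and> uncovered Ups S (rmax \<eta> \<omega>) = {}
              \<and> (\<forall>l\<ge>1. even_count S l = \<eta> l \<and> odd_count S l = \<omega> l))"
    (is "?lists \<longleftrightarrow> ?codes")
proof -
  have list_code: "(\<forall>w\<in>set L. set w \<subseteq> Ups) \<and> prefix_free_list L
      \<longleftrightarrow> prefix_code Ups (set L) \<and> distinct L" for L
    by (auto simp: prefix_free_list_iff prefix_code_def)
  have short: "\<forall>v\<in>S. length v \<le> rmax \<eta> \<omega>"
    if "prefix_code Ups S" "\<forall>l\<ge>1. even_count S l = \<eta> l \<and> odd_count S l = \<omega> l" for S
    using length_le_rmax[OF finite_supports _ _ _ that(2)] that(1) by (auto simp: prefix_code_def)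
  show ?thesis
  proof
    assume ?lists
    then obtain L where L: "\<forall>w\<in>set L. set w \<subseteq> Ups" "prefix_free_list L" "exhaustive_list Ups L"
        "has_length_distribution U1 L \<eta> \<omega>"
      by blast
    then have code: "prefix_code Ups (set L)" and "distinct L"
      using list_code by blast+
    with L(4) have counts: "\<forall>l\<ge>1. even_count (set L) l = \<eta> l \<and> odd_count (set L) l = \<omega> l"
      by (simp add: has_length_distribution_iff_counts)
    with L(3) \<open>Ups \<noteq> {}\<close> short[OF code] have "uncovered Ups (set L) (rmax \<eta> \<omega>) = {}"
      by (simp add: exhaustive_list_iff_uncovered_empty)
    with code counts show ?codes by blast
  next
    assume ?codes
    then obtain S where S: "prefix_code Ups S" "uncovered Ups S (rmax \<eta> \<omega>) = {}"
        "\<forall>l\<ge>1. even_count S l = \<eta> l \<and> odd_count S l = \<omega> l"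
      by blast
    obtain L where L: "set L = S" "distinct L"
      using S(1) finite_distinct_list by (auto simp: prefix_code_def)
    have "exhaustive_list Ups L"
      using S L \<open>Ups \<noteq> {}\<close> short[OF S(1,3)] by (simp add: exhaustive_list_iff_uncovered_empty)
    moreover have "has_length_distribution U1 L \<eta> \<omega>"
      using S(3) L by (simp add: has_length_distribution_iff_counts)
    ultimately show ?lists
      using S(1) L list_code by blast
  qed
qed

end

theorem theorem4:
  fixes Ups U0 U1 :: "'a set" and \<eta> \<omega> :: "nat \<Rightarrow> nat"
  assumes "finite Ups" and "U0 \<union> U1 = Ups" and "U0 \<inter> U1 = {}"
    and "card U0 > 0" and "card U1 > 0"
    and "finite (support \<eta>)" and "finite (support \<omega>)"
  shows "(\<exists>L. (\<forall>w\<in>set L. set w \<subseteq> Ups) \<and> prefix_free_list L \<and> exhaustive_list Ups L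
              \<and> has_length_distribution U1 L \<eta> \<omega>)
     \<longleftrightarrow> (Kplus \<eta> \<omega> (card U0) (card U1) (rmax \<eta> \<omega>) = 0 \<and>
          (\<forall>l\<ge>1. Kplus \<eta> \<omega> (card U0) (card U1) l \<ge> \<bar>Kminus \<eta> \<omega> (card U0) (card U1) l\<bar>))"
proof -
  interpret parity_alphabet Ups U0 U1 using assms(1-3) by unfold_locales
  have "Ups \<noteq> {}" using assms(2,4) by auto
  show ?thesis
    unfolding exhaustive_list_iff_complete_code[OF \<open>Ups \<noteq> {}\<close> assms(6,7)]
    using Kraft_conditions_if_complete complete_code_if_Kraft_conditions[OF assms(6,7)]
    by blast
qed

end
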